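(* For every projection algebra $P$, every DRC-semigroup $S$, and every projection algebra morphism $\phi:P\to\mathbf P(S)$, there exists a unique DRC-morphism $\Phi:\mathbb F(P)\to S$ whose restriction to $P$ (identified with $\mathbf P(\mathbb F(P))$ via $p\leftrightarrow\overline{x_p}$) is $\phi$, i.e.\ $\overline{x_p}\,\Phi=p\phi$ for all $p\in P$.
   Context: Maps are written on the right and composed left to right. A projection algebra is a set $P$ with maps $\theta_p,\delta_p:P\to P$ ($p\in P$) such that for all $p,q$: $p\theta_p=p$, $p\delta_p=p$; $p\theta_{q\theta_p}=q\theta_p$, $p\delta_{q\delta_p}=q\delta_p$; $\theta_q\theta_{q\theta_p}=\theta_q\theta_p$, $\delta_q\delta_{q\delta_p}=\delta_q\delta_p$; $\theta_p\delta_p=\theta_p$, $\delta_p\theta_p=\delta_p$; $\theta_{p\delta_q}\theta_p=\theta_q\theta_p$, $\delta_{p\theta_q}\delta_p=\delta_q\delta_p$. A projection algebra morphism $\phi:P\to P'$ satisfies $(q\theta_p)\phi=(q\phi)\theta'_{p\phi}$, $(q\delta_p)\phi=(q\phi)\delta'_{p\phi}$. Write $p\,\mathscr F\,q$ iff $p=q\delta_p$ and $q=p\theta_q$. A DRC-semigroup is $(S,\cdot,D,R)$, $(S,\cdot)$ a semigroup, $D,R:S\to S$ with, for all $a,b$: $D(a)a=a$, $aR(a)=a$; $D(ab)=D(aD(b))$, $R(ab)=R(R(a)b)$; $D(ab)=D(a)D(ab)D(a)$, $R(ab)=R(b)R(ab)R(b)$; $R(D(a))=D(a)$, $D(R(a))=R(a)$.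 A DRC-morphism preserves $\cdot,D,R$. $\mathbf P(S)=\{D(a):a\in S\}$ is a projection algebra under $q\theta_p=R(qp)$, $q\delta_p=D(pq)$. $\mathbb F(P)$ is the semigroup presented by generators $x_p$ ($p\in P$) and relations $x_p^2=x_p$, $x_px_q=x_px_{p\theta_q}$, $x_px_q=x_{q\delta_p}x_q$; every element equals $\overline{x_{p_1}\cdots x_{p_k}}$ for some $p_1\mathscr F\cdots\mathscr F p_k$ with $p_1,p_k$ determined, and it is a DRC-semigroup with $D(\overline{x_{p_1}\cdots x_{p_k}})=\overline{x_{p_1}}$, $R(\overline{x_{p_1}\cdots x_{p_k}})=\overline{x_{p_k}}$, whose projections are exactly the $\overline{x_p}$, $p\in P$. *)

theory Defs
  imports Main
begin

text \<open>Conventions. Maps are written on the right. For a projection algebra with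
carrier P we write th x p for x theta_p and dl x p for x delta_p.\<close>

definition proj_alg :: "'p set \<Rightarrow> ('p \<Rightarrow> 'p \<Rightarrow> 'p) \<Rightarrow> ('p \<Rightarrow> 'p \<Rightarrow> 'p) \<Rightarrow> bool" where
  "proj_alg P th dl \<longleftrightarrow>
     (\<forall>x\<in>P. \<forall>p\<in>P. th x p \<in> P \<and> dl x p \<in> P) \<and>
     (\<forall>p\<in>P. th p p = p \<and> dl p p = p) \<and>
     (\<forall>p\<in>P. \<forall>q\<in>P. th p (th q p) = th q p \<and> dl p (dl q p) = dl q p) \<and>
     (\<forall>p\<in>P. \<forall>q\<in>P. \<forall>x\<in>P. th (th x q) (th q p) = th (th x q) p
                          \<and> dl (dl x q) (dl q p) = dl (dl x q) p) \<and>
     (\<forall>p\<in>P. \<forall>x\<in>P. dl (th x p) p = th x p \<and> th (dl x p) p = dl x p) \<and>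
     (\<forall>p\<in>P. \<forall>q\<in>P. \<forall>x\<in>P. th (th x (dl p q)) p = th (th x q) p
                          \<and> dl (dl x (th p q)) p = dl (dl x q) p)"

definition proj_alg_morph ::
  "'p set \<Rightarrow> ('p \<Rightarrow> 'p \<Rightarrow> 'p) \<Rightarrow> ('p \<Rightarrow> 'p \<Rightarrow> 'p) \<Rightarrow>
   'q set \<Rightarrow> ('q \<Rightarrow> 'q \<Rightarrow> 'q) \<Rightarrow> ('q \<Rightarrow> 'q \<Rightarrow> 'q) \<Rightarrow> ('p \<Rightarrow> 'q) \<Rightarrow> bool" where
  "proj_alg_morph P th dl P' th' dl' \<phi> \<longleftrightarrow>
     (\<forall>p\<in>P. \<phi> p \<in> P') \<and>
     (\<forall>p\<in>P. \<forall>q\<in>P. \<phi> (th q p) = th' (\<phi> q) (\<phi> p) \<and> \<phi> (dl q p) = dl' (\<phi> q) (\<phi> p))"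

definition drc_semigroup :: "'s set \<Rightarrow> ('s \<Rightarrow> 's \<Rightarrow> 's) \<Rightarrow> ('s \<Rightarrow> 's) \<Rightarrow> ('s \<Rightarrow> 's) \<Rightarrow> bool" where
  "drc_semigroup S m D R \<longleftrightarrow>
     (\<forall>a\<in>S. \<forall>b\<in>S. m a b \<in> S) \<and> (\<forall>a\<in>S. D a \<in> S \<and> R a \<in> S) \<and>
     (\<forall>a\<in>S. \<forall>b\<in>S. \<forall>c\<in>S. m (m a b) c = m a (m b c)) \<and>
     (\<forall>a\<in>S. m (D a) a = a \<and> m a (R a) = a) \<and>
     (\<forall>a\<in>S. \<forall>b\<in>S. D (m a b) = D (m a (D b)) \<and> R (m a b) = R (m (R a) b)) \<and>
     (\<forall>a\<in>S. \<forall>b\<in>S. D (m a b) = m (m (D a) (D (m a b))) (D a)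
                   \<and> R (m a b) = m (m (R b) (R (m a b))) (R b)) \<and>
     (\<forall>a\<in>S. R (D a) = D a \<and> D (R a) = R a)"

definition drc_morph ::
  "'s set \<Rightarrow> ('s \<Rightarrow> 's \<Rightarrow> 's) \<Rightarrow> ('s \<Rightarrow> 's) \<Rightarrow> ('s \<Rightarrow> 's) \<Rightarrow>
   't set \<Rightarrow> ('t \<Rightarrow> 't \<Rightarrow> 't) \<Rightarrow> ('t \<Rightarrow> 't) \<Rightarrow> ('t \<Rightarrow> 't) \<Rightarrow> ('s \<Rightarrow> 't) \<Rightarrow> bool" where
  "drc_morph S m D R T m' D' R' \<Phi> \<longleftrightarrow>
     (\<forall>a\<in>S. \<Phi> a \<in> T) \<and>
     (\<forall>a\<in>S. \<forall>b\<in>S. \<Phi> (m a b) = m' (\<Phi> a) (\<Phi> b)) \<and>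
     (\<forall>a\<in>S. \<Phi> (D a) = D' (\<Phi> a) \<and> \<Phi> (R a) = R' (\<Phi> a))"

definition projs :: "'s set \<Rightarrow> ('s \<Rightarrow> 's) \<Rightarrow> 's set" where
  "projs S D = D ` S"

definition projs_th :: "('s \<Rightarrow> 's \<Rightarrow> 's) \<Rightarrow> ('s \<Rightarrow> 's) \<Rightarrow> 's \<Rightarrow> 's \<Rightarrow> 's" where
  "projs_th m R q p = R (m q p)"

definition projs_dl :: "('s \<Rightarrow> 's \<Rightarrow> 's) \<Rightarrow> ('s \<Rightarrow> 's) \<Rightarrow> 's \<Rightarrow> 's \<Rightarrow> 's" where
  "projs_dl m D q p = D (m p q)"

text \<open>The semigroup F(P): nonempty words over P (word [p1,...,pk] stands for
  x_p1 ... x_pk) modulo the congruence generated by the defining relations.\<close>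

inductive feq :: "'p set \<Rightarrow> ('p \<Rightarrow> 'p \<Rightarrow> 'p) \<Rightarrow> ('p \<Rightarrow> 'p \<Rightarrow> 'p) \<Rightarrow> 'p list \<Rightarrow> 'p list \<Rightarrow> bool"
  for P th dl where
  idem: "p \<in> P \<Longrightarrow> feq P th dl [p, p] [p]"
| rth: "p \<in> P \<Longrightarrow> q \<in> P \<Longrightarrow> feq P th dl [p, q] [p, th p q]"
| rdl: "p \<in> P \<Longrightarrow> q \<in> P \<Longrightarrow> feq P th dl [p, q] [dl q p, q]"
| refl: "set w \<subseteq> P \<Longrightarrow> feq P th dl w w"
| sym: "feq P th dl u v \<Longrightarrow> feq P th dl v u"
| trans: "feq P th dl u v \<Longrightarrow> feq P th dl v w \<Longrightarrow> feq P th dl u w"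
| ctxt: "feq P th dl u v \<Longrightarrow> set x \<subseteq> P \<Longrightarrow> set y \<subseteq> P \<Longrightarrow> feq P th dl (x @ u @ y) (x @ v @ y)"

definition fclass :: "'p set \<Rightarrow> ('p \<Rightarrow> 'p \<Rightarrow> 'p) \<Rightarrow> ('p \<Rightarrow> 'p \<Rightarrow> 'p) \<Rightarrow> 'p list \<Rightarrow> 'p list set" where
  "fclass P th dl w = {v. feq P th dl w v}"

definition Fcar :: "'p set \<Rightarrow> ('p \<Rightarrow> 'p \<Rightarrow> 'p) \<Rightarrow> ('p \<Rightarrow> 'p \<Rightarrow> 'p) \<Rightarrow> 'p list set set" where
  "Fcar P th dl = {fclass P th dl w | w. w \<noteq> [] \<and> set w \<subseteq> P}"

definition Fmult :: "'p set \<Rightarrow> ('p \<Rightarrow> 'p \<Rightarrow> 'p) \<Rightarrow> ('p \<Rightarrow> 'p \<Rightarrow> 'p) \<Rightarrow>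
    'p list set \<Rightarrow> 'p list set \<Rightarrow> 'p list set" where
  "Fmult P th dl A B = fclass P th dl ((SOME u. u \<in> A) @ (SOME v. v \<in> B))"

definition Fgen :: "'p set \<Rightarrow> ('p \<Rightarrow> 'p \<Rightarrow> 'p) \<Rightarrow> ('p \<Rightarrow> 'p \<Rightarrow> 'p) \<Rightarrow> 'p \<Rightarrow> 'p list set" where
  "Fgen P th dl p = fclass P th dl [p]"

definition Frel :: "('p \<Rightarrow> 'p \<Rightarrow> 'p) \<Rightarrow> ('p \<Rightarrow> 'p \<Rightarrow> 'p) \<Rightarrow> 'p \<Rightarrow> 'p \<Rightarrow> bool" where
  "Frel th dl p q \<longleftrightarrow> p = dl q p \<and> q = th p q"

definition Fchain_rep :: "'p set \<Rightarrow> ('p \<Rightarrow> 'p \<Rightarrow> 'p) \<Rightarrow> ('p \<Rightarrow> 'p \<Rightarrow> 'p) \<Rightarrow> 'p list set \<Rightarrow> 'p list" where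
  "Fchain_rep P th dl A = (SOME ps. ps \<noteq> [] \<and> set ps \<subseteq> P \<and>
      successively (Frel th dl) ps \<and> fclass P th dl ps = A)"

definition FD :: "'p set \<Rightarrow> ('p \<Rightarrow> 'p \<Rightarrow> 'p) \<Rightarrow> ('p \<Rightarrow> 'p \<Rightarrow> 'p) \<Rightarrow> 'p list set \<Rightarrow> 'p list set" where
  "FD P th dl A = Fgen P th dl (hd (Fchain_rep P th dl A))"

definition FR :: "'p set \<Rightarrow> ('p \<Rightarrow> 'p \<Rightarrow> 'p) \<Rightarrow> ('p \<Rightarrow> 'p \<Rightarrow> 'p) \<Rightarrow> 'p list set \<Rightarrow> 'p list set" where
  "FR P th dl A = Fgen P th dl (last (Fchain_rep P th dl A))"

end

theory Submission imports Defs begin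

text \<open>Sending a word \<open>x\<^sub>p\<^sub>1 \<dots> x\<^sub>p\<^sub>k\<close> to the product \<open>(p\<^sub>1\<phi>) \<cdot>\<cdot>\<cdot> (p\<^sub>k\<phi>)\<close> in \<open>S\<close> respects the
  defining relations of \<open>\<bbbF>(P)\<close>: the values of \<open>\<phi>\<close> are projections, and for a projection
  \<open>e\<close> and any \<open>a\<close> one has \<open>e a = D(e a) a\<close> and \<open>a e = a R(a e)\<close>. This gives a semigroup
  morphism \<open>\<Phi>\<close>, which is unique because the \<open>x\<^sub>p\<close> generate \<open>\<bbbF>(P)\<close>. It preserves \<open>D\<close> and
  \<open>R\<close> because every element is represented by a word over an \<open>\<F>\<close>-chain, \<open>\<phi>\<close> maps
  \<open>\<F>\<close>-chains of \<open>P\<close> to \<open>\<F>\<close>-chains of \<open>P(S)\<close>, and the product of an \<open>\<F>\<close>-chain of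
  projections has its first entry as \<open>D\<close> and its last entry as \<open>R\<close>.\<close>

definition Fchain :: "'p set \<Rightarrow> ('p \<Rightarrow> 'p \<Rightarrow> 'p) \<Rightarrow> ('p \<Rightarrow> 'p \<Rightarrow> 'p) \<Rightarrow> 'p list \<Rightarrow> bool" where
  "Fchain P th dl ps \<longleftrightarrow> ps \<noteq> [] \<and> set ps \<subseteq> P \<and> successively (Frel th dl) ps"

fun sprod :: "('s \<Rightarrow> 's \<Rightarrow> 's) \<Rightarrow> 's list \<Rightarrow> 's" where
  "sprod m [] = undefined"
| "sprod m [a] = a"
| "sprod m (a # b # w) = m a (sprod m (b # w))"

lemma sprod_Cons: "w \<noteq> [] \<Longrightarrow> sprod m (a # w) = m a (sprod m w)"
  by (cases w) auto

lemma Frel_projs_iff: "Frel (projs_th m R) (projs_dl m D) e f \<longleftrightarrow> e = D (m e f) \<and> f = R (m e f)"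
  by (simp add: Frel_def projs_th_def projs_dl_def)

lemma proj_alg_morph_Fchain:
  assumes "proj_alg_morph P th dl P' th' dl' \<phi>" and "Fchain P th dl ps"
  shows "Fchain P' th' dl' (map \<phi> ps)"
proof -
  have "Frel th' dl' (\<phi> p) (\<phi> q)" if "p \<in> P" "q \<in> P" "Frel th dl p q" for p q
    using assms(1) that unfolding proj_alg_morph_def Frel_def by metis
  then have "successively (\<lambda>p q. Frel th' dl' (\<phi> p) (\<phi> q)) ps"
    using assms(2) unfolding Fchain_def by (auto intro!: successively_mono[where P = "Frel th dl"])
  then show ?thesis
    using assms unfolding Fchain_def proj_alg_morph_def successively_map by auto
qed

declare feq.trans [trans]

locale projection_algebra =
  fixes P :: "'p set" and th dl :: "'p \<Rightarrow> 'p \<Rightarrow> 'p"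
  assumes proj_alg: "proj_alg P th dl"
begin

abbreviation word_eq (infix "\<approx>" 50) where "u \<approx> v \<equiv> feq P th dl u v"

lemma th_closed: "x \<in> P \<Longrightarrow> p \<in> P \<Longrightarrow> th x p \<in> P"
  and dl_closed: "x \<in> P \<Longrightarrow> p \<in> P \<Longrightarrow> dl x p \<in> P"
  and th_self: "p \<in> P \<Longrightarrow> th p p = p"
  and th_at_th: "p \<in> P \<Longrightarrow> q \<in> P \<Longrightarrow> th p (th q p) = th q p"
  and dl_at_dl: "p \<in> P \<Longrightarrow> q \<in> P \<Longrightarrow> dl p (dl q p) = dl q p"
  and th_th_th: "p \<in> P \<Longrightarrow> q \<in> P \<Longrightarrow> x \<in> P \<Longrightarrow> th (th x q) (th q p) = th (th x q) p"
  and dl_dl_dl: "p \<in> P \<Longrightarrow> q \<in> P \<Longrightarrow> x \<in> P \<Longrightarrow> dl (dl x q) (dl q p) = dl (dl x q) p"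
  and dl_th_same: "p \<in> P \<Longrightarrow> x \<in> P \<Longrightarrow> dl (th x p) p = th x p"
  and th_dl_same: "p \<in> P \<Longrightarrow> x \<in> P \<Longrightarrow> th (dl x p) p = dl x p"
  and th_th_dl: "p \<in> P \<Longrightarrow> q \<in> P \<Longrightarrow> x \<in> P \<Longrightarrow> th (th x (dl p q)) p = th (th x q) p"
  and dl_dl_th: "p \<in> P \<Longrightarrow> q \<in> P \<Longrightarrow> x \<in> P \<Longrightarrow> dl (dl x (th p q)) p = dl (dl x q) p"
  using proj_alg unfolding proj_alg_def by auto

lemma Frel_dl_th: "r \<in> P \<Longrightarrow> q \<in> P \<Longrightarrow> Frel th dl (dl (th r q) r) (th r q)"
  unfolding Frel_def
  by (smt (verit, best) th_self dl_at_dl th_th_th dl_th_same th_dl_same th_th_dl dl_dl_th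
      th_closed dl_closed)

lemma Frel_dl_dl:
  "s \<in> P \<Longrightarrow> r \<in> P \<Longrightarrow> t \<in> P \<Longrightarrow> Frel th dl s r \<Longrightarrow> Frel th dl (dl (dl t r) s) (dl t r)"
  unfolding Frel_def
  by (smt (verit) th_at_th dl_dl_dl dl_th_same th_dl_same th_th_dl th_closed dl_closed)

lemma feq_subset: "u \<approx> v \<Longrightarrow> set u \<subseteq> P \<and> set v \<subseteq> P"
  by (induction rule: feq.induct) (auto intro: th_closed dl_closed)

lemma feq_Nil_iff: "u \<approx> v \<Longrightarrow> u = [] \<longleftrightarrow> v = []"
  by (induction rule: feq.induct) auto

lemma feq_append_left: "u \<approx> v \<Longrightarrow> set x \<subseteq> P \<Longrightarrow> x @ u \<approx> x @ v"
  using feq.ctxt[of P th dl u v x "[]"] by simp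

lemma feq_append_right: "u \<approx> v \<Longrightarrow> set y \<subseteq> P \<Longrightarrow> u @ y \<approx> v @ y"
  using feq.ctxt[of P th dl u v "[]" y] by simp

lemma fclass_eq: "u \<approx> v \<Longrightarrow> fclass P th dl u = fclass P th dl v"
  unfolding fclass_def by (auto intro: feq.trans feq.sym)

lemma feq_some_fclass: "set w \<subseteq> P \<Longrightarrow> w \<approx> (SOME v. v \<in> fclass P th dl w)"
  using someI[of "\<lambda>v. v \<in> fclass P th dl w" w] unfolding fclass_def by (auto intro: feq.refl)

lemma Fcar_iff: "A \<in> Fcar P th dl \<longleftrightarrow> (\<exists>w. w \<noteq> [] \<and> set w \<subseteq> P \<and> A = fclass P th dl w)"
  unfolding Fcar_def by auto

lemma Fmult_fclass:
  assumes "set u \<subseteq> P" and "set v \<subseteq> P"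
  shows "Fmult P th dl (fclass P th dl u) (fclass P th dl v) = fclass P th dl (u @ v)"
proof -
  define u' v' where "u' = (SOME x. x \<in> fclass P th dl u)" and "v' = (SOME x. x \<in> fclass P th dl v)"
  have "u \<approx> u'" "v \<approx> v'"
    using feq_some_fclass assms unfolding u'_def v'_def by auto
  then have "u @ v \<approx> u' @ v'"
    using feq.trans feq_append_right feq_append_left feq_subset assms by metis
  then show ?thesis
    unfolding Fmult_def u'_def[symmetric] v'_def[symmetric] by (simp add: fclass_eq)
qed

lemma Fchain_dl_last:
  assumes "Fchain P th dl ps" and "t \<in> P"
  shows "\<exists>qs. Fchain P th dl qs \<and> last qs = dl t (last ps) \<and> butlast ps @ [dl t (last ps)] \<approx> qs"
  using assms
proof (induction ps arbitrary: t rule: rev_induct)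
  case Nil
  then show ?case by (simp add: Fchain_def)
next
  case (snoc r ps)
  show ?case
  proof (cases "ps = []")
    case True
    then show ?thesis
      using snoc.prems by (auto simp: Fchain_def intro!: exI[of _ "[dl t r]"] feq.refl dl_closed)
  next
    case False
    define s r' where "s = last ps" and "r' = dl t r"
    have chain: "Fchain P th dl ps" and sr: "Frel th dl s r" and P: "s \<in> P" "r \<in> P" "set ps \<subseteq> P"
      using snoc.prems False unfolding s_def Fchain_def by (auto simp: successively_append_iff)
    have r': "r' \<in> P"
      using P snoc.prems by (simp add: r'_def dl_closed)
    obtain qs where qs: "Fchain P th dl qs" "last qs = dl r' s" "butlast ps @ [dl r' s] \<approx> qs"
      using snoc.IH[OF chain r'] s_def by auto
    have bP: "set (butlast ps) \<subseteq> P"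
      using P(3) by (meson in_set_butlastD subsetD subsetI)
    have "ps @ [r'] = butlast ps @ [s, r']"
      using False s_def by (metis append.assoc append_Cons append_Nil append_butlast_last_id)
    also have "\<dots> \<approx> butlast ps @ [dl r' s, r']"
      using feq_append_left[OF feq.rdl[OF P(1) r'] bP] .
    also have "\<dots> = (butlast ps @ [dl r' s]) @ [r']"
      by simp
    also have "\<dots> \<approx> qs @ [r']"
      using feq_append_right[OF qs(3)] r' by simp
    finally have "ps @ [r'] \<approx> qs @ [r']" .
    moreover have "Fchain P th dl (qs @ [r'])"
      using qs Frel_dl_dl[OF P(1,2) snoc.prems(2) sr] r'
      by (auto simp: Fchain_def r'_def successively_append_iff)
    ultimately show ?thesis
      by (auto simp: r'_def)
  qed
qed

text \<open>To append a letter \<open>q\<close> to a chain ending in \<open>r\<close>, rewrite \<open>x\<^sub>r x\<^sub>q\<close> to \<open>x\<^sub>r x\<^sub>q\<^sub>'\<close> and then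
  to \<open>x\<^sub>r\<^sub>' x\<^sub>q\<^sub>'\<close>, where \<open>q' = r\<theta>\<^sub>q\<close> and \<open>r' = q'\<delta>\<^sub>r\<close>; replacing \<open>r\<close> by \<open>r'\<close> is then repaired
  backwards along the chain.\<close>

lemma feq_Fchain_exists:
  assumes "w \<noteq> []" and "set w \<subseteq> P"
  shows "\<exists>ps. Fchain P th dl ps \<and> w \<approx> ps"
  using assms
proof (induction w rule: rev_induct)
  case Nil
  then show ?case by simp
next
  case (snoc q w)
  show ?case
  proof (cases "w = []")
    case True
    then show ?thesis
      using snoc.prems by (auto simp: Fchain_def intro!: exI[of _ "[q]"] feq.refl)
  next
    case False
    have q: "q \<in> P" and wP: "set w \<subseteq> P"
      using snoc.prems by auto
    obtain ps where ps: "Fchain P th dl ps" "w \<approx> ps"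
      using snoc.IH[OF False wP] by auto
    define r q' r' where "r = last ps" and "q' = th r q" and "r' = dl q' r"
    have r: "r \<in> P" and bP: "set (butlast ps) \<subseteq> P"
      using ps(1) unfolding Fchain_def r_def by (auto dest: in_set_butlastD)
    have q': "q' \<in> P"
      using r q by (simp add: q'_def th_closed)
    obtain qs where qs: "Fchain P th dl qs" "last qs = r'" "butlast ps @ [r'] \<approx> qs"
      using Fchain_dl_last[OF ps(1) q'] r_def r'_def by auto
    have "w @ [q] \<approx> ps @ [q]"
      using feq_append_right[OF ps(2)] q by simp
    also have "\<dots> = butlast ps @ [r, q]"
      using ps(1) r_def unfolding Fchain_def
      by (metis append.assoc append_Cons append_Nil append_butlast_last_id)
    also have "\<dots> \<approx> butlast ps @ [r, q']"
      using feq_append_left[OF feq.rth[OF r q] bP] q'_def by simp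
    also have "\<dots> \<approx> butlast ps @ [r', q']"
      using feq_append_left[OF feq.rdl[OF r q'] bP] r'_def by simp
    also have "\<dots> = (butlast ps @ [r']) @ [q']"
      by simp
    also have "\<dots> \<approx> qs @ [q']"
      using feq_append_right[OF qs(3)] q' by simp
    finally have "w @ [q] \<approx> qs @ [q']" .
    moreover have "Fchain P th dl (qs @ [q'])"
      using qs Frel_dl_th[OF r q] q' unfolding Fchain_def q'_def r'_def
      by (auto simp: successively_append_iff)
    ultimately show ?thesis
      by blast
  qed
qed

lemma Fchain_rep_spec:
  assumes "A \<in> Fcar P th dl"
  shows "Fchain P th dl (Fchain_rep P th dl A) \<and> fclass P th dl (Fchain_rep P th dl A) = A"
proof -
  obtain w where w: "w \<noteq> []" "set w \<subseteq> P" "A = fclass P th dl w"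
    using assms Fcar_iff by auto
  obtain ps where "Fchain P th dl ps" "w \<approx> ps"
    using feq_Fchain_exists[OF w(1,2)] by auto
  then have "\<exists>ps. Fchain P th dl ps \<and> fclass P th dl ps = A"
    using fclass_eq w(3) by auto
  then show ?thesis
    unfolding Fchain_rep_def Fchain_def conj_assoc by (rule someI_ex)
qed

end

locale drc =
  fixes S :: "'s set" and m :: "'s \<Rightarrow> 's \<Rightarrow> 's" and D R :: "'s \<Rightarrow> 's"
  assumes drc_semigroup: "drc_semigroup S m D R"
begin

lemma mult_closed: "a \<in> S \<Longrightarrow> b \<in> S \<Longrightarrow> m a b \<in> S"
  and D_closed: "a \<in> S \<Longrightarrow> D a \<in> S"
  and R_closed: "a \<in> S \<Longrightarrow> R a \<in> S"
  and assoc: "a \<in> S \<Longrightarrow> b \<in> S \<Longrightarrow> c \<in> S \<Longrightarrow> m (m a b) c = m a (m b c)"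
  and D_mult: "a \<in> S \<Longrightarrow> m (D a) a = a"
  and mult_R: "a \<in> S \<Longrightarrow> m a (R a) = a"
  and D_mult_D: "a \<in> S \<Longrightarrow> b \<in> S \<Longrightarrow> D (m a b) = D (m a (D b))"
  and R_R_mult: "a \<in> S \<Longrightarrow> b \<in> S \<Longrightarrow> R (m a b) = R (m (R a) b)"
  and D_mult_conj: "a \<in> S \<Longrightarrow> b \<in> S \<Longrightarrow> D (m a b) = m (m (D a) (D (m a b))) (D a)"
  and R_mult_conj: "a \<in> S \<Longrightarrow> b \<in> S \<Longrightarrow> R (m a b) = m (m (R b) (R (m a b))) (R b)"
  and R_D: "a \<in> S \<Longrightarrow> R (D a) = D a"
  and D_R: "a \<in> S \<Longrightarrow> D (R a) = R a"
  using drc_semigroup unfolding drc_semigroup_def by auto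

lemma proj_closed: "e \<in> projs S D \<Longrightarrow> e \<in> S"
  and proj_D: "e \<in> projs S D \<Longrightarrow> D e = e"
  and proj_R: "e \<in> projs S D \<Longrightarrow> R e = e"
  unfolding projs_def by (auto simp: D_closed R_D) (metis D_R D_closed R_D)

lemma proj_idem: "e \<in> projs S D \<Longrightarrow> m e e = e"
  using D_mult proj_D proj_closed by metis

lemma D_mult_proj:
  assumes e: "e \<in> projs S D" and a: "a \<in> S"
  shows "m (D (m e a)) a = m e a"
proof -
  define x y where "x = D (m e a)" and "y = m e x"
  have eS: "e \<in> S" and xS: "x \<in> S" and yS: "y \<in> S"
    using e a by (auto simp: x_def y_def proj_closed mult_closed D_closed)
  have x: "m y e = x"
    using D_mult_conj[OF eS a] proj_D[OF e] unfolding x_def y_def by metis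
  have "m x e = m y (m e e)"
    using assoc[OF yS eS eS] x by simp
  also have "\<dots> = x"
    using proj_idem[OF e] x by simp
  finally have "m x a = m (m x e) a"
    by simp
  also have "\<dots> = m x (m e a)"
    using assoc eS xS a by simp
  also have "\<dots> = m e a"
    using D_mult eS a mult_closed by (simp add: x_def)
  finally show ?thesis
    by (simp add: x_def)
qed

lemma mult_R_proj:
  assumes e: "e \<in> projs S D" and a: "a \<in> S"
  shows "m a (R (m a e)) = m a e"
proof -
  define x y where "x = R (m a e)" and "y = m x e"
  have eS: "e \<in> S" and xS: "x \<in> S" and yS: "y \<in> S"
    using e a by (auto simp: x_def y_def proj_closed mult_closed R_closed)
  have x: "m e y = x"
    using R_mult_conj[OF a eS] proj_R[OF e] assoc[OF eS xS eS] unfolding x_def y_def by metis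
  have "m e x = m (m e e) y"
    using assoc[OF eS eS yS] x by simp
  also have "\<dots> = x"
    using proj_idem[OF e] x by simp
  finally have "m a x = m a (m e x)"
    by simp
  also have "\<dots> = m (m a e) x"
    using assoc eS xS a by simp
  also have "\<dots> = m a e"
    using mult_R a eS mult_closed by (simp add: x_def)
  finally show ?thesis
    by (simp add: x_def)
qed

lemma sprod_closed: "w \<noteq> [] \<Longrightarrow> set w \<subseteq> S \<Longrightarrow> sprod m w \<in> S"
  by (induction w rule: induct_list012) (auto intro: mult_closed)

lemma sprod_append:
  "u \<noteq> [] \<Longrightarrow> v \<noteq> [] \<Longrightarrow> set u \<subseteq> S \<Longrightarrow> set v \<subseteq> S \<Longrightarrow>
   sprod m (u @ v) = m (sprod m u) (sprod m v)"
  by (induction u rule: induct_list012) (auto simp: sprod_Cons assoc sprod_closed)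

lemma D_sprod_Fchain:
  "Fchain (projs S D) (projs_th m R) (projs_dl m D) es \<Longrightarrow> D (sprod m es) = hd es"
proof (induction es rule: induct_list012)
  case (3 e f es)
  then have ef: "Frel (projs_th m R) (projs_dl m D) e f" and S: "e \<in> S" "set (f # es) \<subseteq> S"
    and IH: "D (sprod m (f # es)) = f"
    using proj_closed by (auto simp: Fchain_def)
  have "D (sprod m (e # f # es)) = D (m e (D (sprod m (f # es))))"
    using D_mult_D S sprod_closed by simp
  then show ?case
    using ef IH by (simp add: Frel_projs_iff)
qed (auto simp: Fchain_def proj_D)

lemma R_sprod_Fchain:
  "Fchain (projs S D) (projs_th m R) (projs_dl m D) es \<Longrightarrow> R (sprod m es) = last es"
proof (induction es rule: rev_induct)
  case (snoc f es)
  show ?case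
  proof (cases "es = []")
    case True
    then show ?thesis
      using snoc.prems by (simp add: Fchain_def proj_R)
  next
    case False
    then have ef: "Frel (projs_th m R) (projs_dl m D) (last es) f" and S: "set es \<subseteq> S" "f \<in> S"
      and IH: "R (sprod m es) = last es"
      using snoc proj_closed by (auto simp: Fchain_def successively_append_iff)
    have "R (sprod m (es @ [f])) = R (m (R (sprod m es)) f)"
      using R_R_mult sprod_append[OF False] S sprod_closed False by simp
    then show ?thesis
      using ef IH by (simp add: Frel_projs_iff)
  qed
qed (simp add: Fchain_def)

end

locale proj_alg_to_drc = projection_algebra P th dl + drc S m D R
  for P :: "'p set" and th dl :: "'p \<Rightarrow> 'p \<Rightarrow> 'p"
    and S :: "'s set" and m :: "'s \<Rightarrow> 's \<Rightarrow> 's" and D R :: "'s \<Rightarrow> 's" +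
  fixes \<phi> :: "'p \<Rightarrow> 's"
  assumes morph: "proj_alg_morph P th dl (projs S D) (projs_th m R) (projs_dl m D) \<phi>"
begin

lemma \<phi>_proj: "p \<in> P \<Longrightarrow> \<phi> p \<in> projs S D"
  and \<phi>_th: "p \<in> P \<Longrightarrow> q \<in> P \<Longrightarrow> \<phi> (th p q) = R (m (\<phi> p) (\<phi> q))"
  and \<phi>_dl: "p \<in> P \<Longrightarrow> q \<in> P \<Longrightarrow> \<phi> (dl q p) = D (m (\<phi> p) (\<phi> q))"
  using morph unfolding proj_alg_morph_def projs_th_def projs_dl_def by auto

lemma \<phi>_closed: "p \<in> P \<Longrightarrow> \<phi> p \<in> S"
  using \<phi>_proj proj_closed by blast

definition word_prod :: "'p list \<Rightarrow> 's" where
  "word_prod w = sprod m (map \<phi> w)"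

lemma word_prod_single [simp]: "word_prod [p] = \<phi> p"
  by (simp add: word_prod_def)

lemma word_prod_Cons: "w \<noteq> [] \<Longrightarrow> word_prod (p # w) = m (\<phi> p) (word_prod w)"
  by (simp add: word_prod_def sprod_Cons)

lemma word_prod_closed: "w \<noteq> [] \<Longrightarrow> set w \<subseteq> P \<Longrightarrow> word_prod w \<in> S"
  unfolding word_prod_def by (rule sprod_closed) (auto simp: \<phi>_closed)

lemma word_prod_append:
  "u \<noteq> [] \<Longrightarrow> v \<noteq> [] \<Longrightarrow> set u \<subseteq> P \<Longrightarrow> set v \<subseteq> P \<Longrightarrow>
   word_prod (u @ v) = m (word_prod u) (word_prod v)"
  unfolding word_prod_def by (subst map_append, rule sprod_append) (auto simp: \<phi>_closed)

lemma word_prod_append_cong: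
  assumes "word_prod u = word_prod v" "u \<noteq> []" "v \<noteq> []" "set u \<subseteq> P" "set v \<subseteq> P" "set x \<subseteq> P"
  shows "word_prod (x @ u) = word_prod (x @ v)" and "word_prod (u @ x) = word_prod (v @ x)"
  using assms by (cases "x = []"; simp add: word_prod_append)+

lemma feq_word_prod: "u \<approx> v \<Longrightarrow> word_prod u = word_prod v"
proof (induction rule: feq.induct)
  case (idem p)
  then show ?case by (simp add: word_prod_Cons proj_idem \<phi>_proj)
next
  case (rth p q)
  then show ?case by (simp add: word_prod_Cons \<phi>_th mult_R_proj \<phi>_proj \<phi>_closed)
next
  case (rdl p q)
  then show ?case by (simp add: word_prod_Cons \<phi>_dl D_mult_proj \<phi>_proj \<phi>_closed)
next
  case (ctxt u v x y)
  have uv: "set u \<subseteq> P" "set v \<subseteq> P" "u = [] \<longleftrightarrow> v = []"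
    using feq_subset[OF ctxt.hyps(1)] feq_Nil_iff[OF ctxt.hyps(1)] by auto
  show ?case
  proof (cases "u = []")
    case False
    then have "word_prod (u @ y) = word_prod (v @ y)"
      using uv ctxt by (intro word_prod_append_cong(2)) auto
    then show ?thesis
      using uv ctxt False by (intro word_prod_append_cong(1)) auto
  qed (use uv in simp)
qed auto

lemma D_word_prod_Fchain: "Fchain P th dl ps \<Longrightarrow> D (word_prod ps) = \<phi> (hd ps)"
  using D_sprod_Fchain[OF proj_alg_morph_Fchain[OF morph]]
  by (simp add: word_prod_def Fchain_def hd_map)

lemma R_word_prod_Fchain: "Fchain P th dl ps \<Longrightarrow> R (word_prod ps) = \<phi> (last ps)"
  using R_sprod_Fchain[OF proj_alg_morph_Fchain[OF morph]]
  by (simp add: word_prod_def Fchain_def last_map)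

definition Fhom :: "'p list set \<Rightarrow> 's" where
  "Fhom A = word_prod (SOME w. w \<in> A)"

lemma Fhom_fclass: "set w \<subseteq> P \<Longrightarrow> Fhom (fclass P th dl w) = word_prod w"
  unfolding Fhom_def using feq_word_prod feq_some_fclass by metis

lemma Fhom_Fgen: "p \<in> P \<Longrightarrow> Fhom (Fgen P th dl p) = \<phi> p"
  unfolding Fgen_def by (simp add: Fhom_fclass)

lemma Fhom_drc_morph: "drc_morph (Fcar P th dl) (Fmult P th dl) (FD P th dl) (FR P th dl) S m D R Fhom"
  unfolding drc_morph_def
proof (intro conjI ballI)
  fix A assume "A \<in> Fcar P th dl"
  then show "Fhom A \<in> S"
    by (auto simp: Fcar_iff Fhom_fclass word_prod_closed)
next
  fix A B assume "A \<in> Fcar P th dl" "B \<in> Fcar P th dl"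
  then obtain u v where "u \<noteq> []" "set u \<subseteq> P" "A = fclass P th dl u"
    and "v \<noteq> []" "set v \<subseteq> P" "B = fclass P th dl v"
    by (auto simp: Fcar_iff)
  then show "Fhom (Fmult P th dl A B) = m (Fhom A) (Fhom B)"
    by (simp add: Fmult_fclass Fhom_fclass word_prod_append)
next
  fix A assume "A \<in> Fcar P th dl"
  define ps where "ps = Fchain_rep P th dl A"
  have ps: "Fchain P th dl ps" "fclass P th dl ps = A"
    using Fchain_rep_spec \<open>A \<in> Fcar P th dl\<close> by (auto simp: ps_def)
  then have "Fhom A = word_prod ps" and "hd ps \<in> P" "last ps \<in> P"
    using Fhom_fclass by (auto simp: Fchain_def)
  then show "Fhom (FD P th dl A) = D (Fhom A)" and "Fhom (FR P th dl A) = R (Fhom A)"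
    using D_word_prod_Fchain[OF ps(1)] R_word_prod_Fchain[OF ps(1)]
    by (simp_all add: FD_def FR_def ps_def[symmetric] Fhom_Fgen)
qed

lemma drc_morph_eq_Fhom:
  assumes morph\<Psi>: "drc_morph (Fcar P th dl) (Fmult P th dl) (FD P th dl) (FR P th dl) S m D R \<Psi>"
    and gen\<Psi>: "\<forall>p\<in>P. \<Psi> (Fgen P th dl p) = \<phi> p"
    and A: "A \<in> Fcar P th dl"
  shows "\<Psi> A = Fhom A"
proof -
  have "\<Psi> (fclass P th dl w) = word_prod w" if "w \<noteq> []" "set w \<subseteq> P" for w
    using that
  proof (induction w rule: induct_list012)
    case (2 p)
    then show ?case using gen\<Psi> by (simp add: Fgen_def)
  next
    case (3 p q w)
    have "fclass P th dl (p # q # w) = Fmult P th dl (fclass P th dl [p]) (fclass P th dl (q # w))"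
      using 3 Fmult_fclass[of "[p]" "q # w"] by simp
    moreover have "fclass P th dl [p] \<in> Fcar P th dl" "fclass P th dl (q # w) \<in> Fcar P th dl"
      using 3 Fcar_iff by (auto intro!: exI)
    ultimately have "\<Psi> (fclass P th dl (p # q # w))
        = m (\<Psi> (fclass P th dl [p])) (\<Psi> (fclass P th dl (q # w)))"
      using morph\<Psi> unfolding drc_morph_def by simp
    then show ?case
      using 3 gen\<Psi> by (simp add: Fgen_def word_prod_Cons)
  qed simp
  then show ?thesis
    using A by (auto simp: Fcar_iff Fhom_fclass)
qed

end

theorem proposition8p12:
  fixes P :: "'p set" and th dl :: "'p \<Rightarrow> 'p \<Rightarrow> 'p"
    and S :: "'s set" and m :: "'s \<Rightarrow> 's \<Rightarrow> 's" and D R :: "'s \<Rightarrow> 's"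
    and \<phi> :: "'p \<Rightarrow> 's"
  assumes "proj_alg P th dl"
    and "drc_semigroup S m D R"
    and "proj_alg_morph P th dl (projs S D) (projs_th m R) (projs_dl m D) \<phi>"
  shows "\<exists>\<Phi>. drc_morph (Fcar P th dl) (Fmult P th dl) (FD P th dl) (FR P th dl) S m D R \<Phi>
            \<and> (\<forall>p\<in>P. \<Phi> (Fgen P th dl p) = \<phi> p)
            \<and> (\<forall>\<Psi>. drc_morph (Fcar P th dl) (Fmult P th dl) (FD P th dl) (FR P th dl) S m D R \<Psi>
                    \<and> (\<forall>p\<in>P. \<Psi> (Fgen P th dl p) = \<phi> p)
                  \<longrightarrow> (\<forall>a\<in>Fcar P th dl. \<Psi> a = \<Phi> a))"
proof -
  interpret proj_alg_to_drc P th dl S m D R \<phi>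
    using assms by (intro proj_alg_to_drc.intro projection_algebra.intro drc.intro
        proj_alg_to_drc_axioms.intro)
  show ?thesis
    using Fhom_drc_morph Fhom_Fgen drc_morph_eq_Fhom by blast
qed

end
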